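(* Let $i\in[d]$, $\Delta_i>0$ and $c_4\ge1$ a constant, and suppose the offsets satisfy $\|w_{i,r}\|_2\le\Delta_i$ and $|b_{i,r}|\le\Delta_i$ for all $r\in[m]$. Then for every $x_{1:i}$ with $\|x_{1:i}\|_2\le\frac12$, with probability at least $1-\exp\!\left(-\frac{32(c_4-1)^2m^2\Delta_i^2}{\pi}\right)$ over the random initialization, for at most a $c_4\frac{4\Delta_i\sqrt m}{\sqrt\pi}$ fraction of $r\in[m]$ we have $$\mathbf 1\{\langle\bar w_{i,r}+w_{i,r},\hat x_{1:i}\rangle+\bar b_{i,r}+b_{i,r}\ge0\}\ne\mathbf 1\{\langle\bar w_{i,r},\hat x_{1:i}\rangle+\bar b_{i,r}\ge0\}.$$
   Context: For $\|x_{1:i}\|_2\le1$, $\hat x_{1:i}=(x_1,\dots,x_i,\sqrt{1-\|x_{1:i}\|_2^2})\in\mathbb{R}^{i+1}$. Random initial parameters $\bar w_{i,r}\sim\mathcal N(0,\frac1mI_{i+1})$, $\bar b_{i,r}\sim\mathcal N(0,\frac1m)$, independent over $r\in[m]$; $w_{i,r}\in\mathbb{R}^{i+1}$, $b_{i,r}\in\mathbb{R}$ are (fixed) offsets. *)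

theory Defs
  imports "HOL-Probability.Probability"
begin

(* Vectors in R^k are represented as functions nat => real, using coordinates 0..k-1.
   x_{1:i} = (x 0, ..., x (i-1));  hat x_{1:i} in R^{i+1} has coordinates 0..i. *)

definition xhat :: "nat \<Rightarrow> (nat \<Rightarrow> real) \<Rightarrow> (nat \<Rightarrow> real)" where
  "xhat i x = (\<lambda>j. if j < i then x j
                    else if j = i then sqrt (1 - (\<Sum>k<i. (x k)\<^sup>2)) else 0)"

definition ip :: "nat \<Rightarrow> (nat \<Rightarrow> real) \<Rightarrow> (nat \<Rightarrow> real) \<Rightarrow> real" where
  "ip i u v = (\<Sum>j\<le>i. u j * v j)"

definition gauss_m :: "nat \<Rightarrow> real measure" where
  "gauss_m m = density lborel (normal_density 0 (sqrt (1 / real m)))"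

(* joint law of the random initialisation: independently for each r < m,
   wbar_{i,r} ~ N(0, (1/m) I_{i+1}) (coordinates 0..i) and bbar_{i,r} ~ N(0, 1/m);
   a sample theta gives wbar_{i,r} = fst (theta r), bbar_{i,r} = snd (theta r). *)
definition init_measure :: "nat \<Rightarrow> nat \<Rightarrow> (nat \<Rightarrow> (nat \<Rightarrow> real) \<times> real) measure" where
  "init_measure m i = PiM {..<m} (\<lambda>r. PiM {..i} (\<lambda>j. gauss_m m) \<Otimes>\<^sub>M gauss_m m)"

definition flip_set ::
  "nat \<Rightarrow> nat \<Rightarrow> (nat \<Rightarrow> nat \<Rightarrow> real) \<Rightarrow> (nat \<Rightarrow> real) \<Rightarrow> (nat \<Rightarrow> real)
     \<Rightarrow> (nat \<Rightarrow> (nat \<Rightarrow> real) \<times> real) \<Rightarrow> nat set" where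
  "flip_set m i w b x \<theta> =
     {r \<in> {..<m}.
        (ip i (\<lambda>j. fst (\<theta> r) j + w r j) (xhat i x) + snd (\<theta> r) + b r \<ge> 0)
        \<noteq> (ip i (fst (\<theta> r)) (xhat i x) + snd (\<theta> r) \<ge> 0)}"

end

theory Submission
  imports Defs
begin

(* A neuron can change its activation only if its pre-activation at initialisation,
   <wbar, xhat> + bbar, lies within 2 Delta of zero: the offsets shift it by
   |<w, xhat>| + |b| <= 2 Delta, because xhat is a unit vector.  Conditionally on wbar,
   bbar is N(0, 1/m), whose density is at most sqrt m / sqrt (2 pi), so each neuron flips
   with probability at most p = 4 Delta sqrt m / sqrt pi.  The neurons are independent, so
   by Hoeffding's inequality more than c4 p m of them flip with probability at most
   exp (-2 ((c4 - 1) p m)^2 / m).  Of the hypotheses on i and x only (sum j<i. x j^2) <= 1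
   matters, which makes xhat a unit vector. *)

lemma normal_density_le:
  assumes "0 < \<sigma>"
  shows "normal_density \<mu> \<sigma> v \<le> 1 / (\<sigma> * sqrt (2 * pi))"
proof -
  have "normal_density \<mu> \<sigma> v \<le> 1 / sqrt (2 * pi * \<sigma>\<^sup>2) * 1"
    unfolding normal_density_def by (intro mult_left_mono) auto
  also have "1 / sqrt (2 * pi * \<sigma>\<^sup>2) * 1 = 1 / (\<sigma> * sqrt (2 * pi))"
    using assms by (simp add: real_sqrt_mult mult.commute)
  finally show ?thesis .
qed

lemma emeasure_normal_density_Icc_le:
  assumes "0 < \<sigma>" "a \<le> b"
  shows "emeasure (density lborel (normal_density \<mu> \<sigma>)) {a..b} \<le> ennreal ((b - a) / (\<sigma> * sqrt (2 * pi)))"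
proof -
  have "emeasure (density lborel (normal_density \<mu> \<sigma>)) {a..b}
      = (\<integral>\<^sup>+v. ennreal (normal_density \<mu> \<sigma> v) * indicator {a..b} v \<partial>lborel)"
    by (subst emeasure_density) auto
  also have "\<dots> \<le> (\<integral>\<^sup>+v. ennreal (1 / (\<sigma> * sqrt (2 * pi))) * indicator {a..b} v \<partial>lborel)"
    using normal_density_le[OF assms(1)]
    by (intro nn_integral_mono mult_right_mono) (auto intro!: ennreal_leI)
  also have "\<dots> = ennreal ((b - a) / (\<sigma> * sqrt (2 * pi)))"
    using assms by (simp add: nn_integral_cmult_indicator ennreal_mult[symmetric])
  finally show ?thesis .
qed

lemma measure_pair_normal_abs_add_le:
  fixes \<mu> \<sigma> :: real
  assumes N: "prob_space N" and \<sigma>: "0 < \<sigma>" and f: "f \<in> borel_measurable N" and "0 \<le> t"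
  defines "G \<equiv> density lborel (normal_density \<mu> \<sigma>)"
  shows "measure (N \<Otimes>\<^sub>M G) {z \<in> space (N \<Otimes>\<^sub>M G). \<bar>snd z + f (fst z)\<bar> \<le> t}
           \<le> 2 * t / (\<sigma> * sqrt (2 * pi))"
proof -
  interpret N: prob_space N by (rule N)
  interpret G: prob_space G unfolding G_def using \<sigma> by (rule prob_space_normal_density)
  let ?S = "{z \<in> space (N \<Otimes>\<^sub>M G). \<bar>snd z + f (fst z)\<bar> \<le> t}"
  have S: "?S \<in> sets (N \<Otimes>\<^sub>M G)"
    using f unfolding G_def by measurable
  have "emeasure (N \<Otimes>\<^sub>M G) ?S = (\<integral>\<^sup>+u. emeasure G (Pair u -` ?S) \<partial>N)"
    using S by (rule G.emeasure_pair_measure_alt)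
  also have "\<dots> \<le> (\<integral>\<^sup>+u. ennreal (2 * t / (\<sigma> * sqrt (2 * pi))) \<partial>N)"
  proof (rule nn_integral_mono)
    fix u assume "u \<in> space N"
    then have "Pair u -` ?S = {- f u - t .. - f u + t}"
      by (auto simp: space_pair_measure G_def)
    then show "emeasure G (Pair u -` ?S) \<le> ennreal (2 * t / (\<sigma> * sqrt (2 * pi)))"
      using emeasure_normal_density_Icc_le[OF \<sigma>, of "- f u - t" "- f u + t" \<mu>] \<open>0 \<le> t\<close>
      by (simp add: G_def)
  qed
  also have "\<dots> = ennreal (2 * t / (\<sigma> * sqrt (2 * pi)))"
    by (simp add: N.emeasure_space_1)
  finally show ?thesis
    using \<open>0 \<le> t\<close> \<sigma> by (simp add: measure_def enn2real_leI)
qed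

lemma sum_xhat_squared:
  assumes "(\<Sum>j<i. (x j)\<^sup>2) \<le> 1"
  shows "(\<Sum>j\<le>i. (xhat i x j)\<^sup>2) = 1"
proof -
  have "(\<Sum>j\<le>i. (xhat i x j)\<^sup>2) = (\<Sum>j<i. (xhat i x j)\<^sup>2) + (xhat i x i)\<^sup>2"
    by (simp add: lessThan_Suc_atMost[symmetric])
  also have "(\<Sum>j<i. (xhat i x j)\<^sup>2) = (\<Sum>j<i. (x j)\<^sup>2)"
    by (intro sum.cong) (auto simp: xhat_def)
  also have "(xhat i x i)\<^sup>2 = 1 - (\<Sum>j<i. (x j)\<^sup>2)"
    using assms by (simp add: xhat_def)
  finally show ?thesis by simp
qed

lemma abs_ip_xhat_le:
  assumes "(\<Sum>j<i. (x j)\<^sup>2) \<le> 1"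
  shows "\<bar>ip i u (xhat i x)\<bar> \<le> L2_set u {..i}"
proof -
  have "\<bar>ip i u (xhat i x)\<bar> \<le> (\<Sum>j\<le>i. \<bar>u j\<bar> * \<bar>xhat i x j\<bar>)"
    unfolding ip_def by (rule order_trans[OF sum_abs]) (simp add: abs_mult)
  also have "\<dots> \<le> L2_set u {..i} * L2_set (xhat i x) {..i}"
    by (rule L2_set_mult_ineq)
  also have "L2_set (xhat i x) {..i} = 1"
    using sum_xhat_squared[OF assms] by (simp add: L2_set_def)
  finally show ?thesis by simp
qed

lemma ip_add_left: "ip i (\<lambda>j. u j + v j) y = ip i u y + ip i v y"
  unfolding ip_def by (simp add: distrib_right sum.distrib)

lemma indep_vars_PiM_components:
  assumes "finite I" and M: "\<And>i. i \<in> I \<Longrightarrow> prob_space (M i)"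
  shows "prob_space.indep_vars (PiM I M) M (\<lambda>i \<theta>. \<theta> i) I"
proof -
  interpret P: prob_space "PiM I M" using M by (rule prob_space_PiM)
  show ?thesis
  proof (cases "I = {}")
    case True
    show ?thesis
      unfolding P.indep_vars_def P.indep_sets_def using True by simp
  next
    case False
    have "distr (PiM I M) (PiM I M) (\<lambda>\<theta>. \<lambda>i\<in>I. \<theta> i) = distr (PiM I M) (PiM I M) (\<lambda>\<theta>. \<theta>)"
      by (rule distr_cong) (auto simp: space_PiM PiE_restrict)
    also have "\<dots> = PiM I (\<lambda>i. distr (PiM I M) (M i) (\<lambda>\<theta>. \<theta> i))"
      using M by (auto intro!: PiM_cong distr_PiM_component[symmetric])
    finally show ?thesis
      using False by (subst P.indep_vars_iff_distr_eq_PiM') auto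
  qed
qed

lemma measure_PiM_card_hits_le:
  assumes I: "finite I" and M: "\<And>i. i \<in> I \<Longrightarrow> prob_space (M i)"
    and A: "\<And>i. i \<in> I \<Longrightarrow> A i \<in> sets (M i)"
    and p: "\<And>i. i \<in> I \<Longrightarrow> measure (M i) (A i) \<le> p" and "0 \<le> t"
  shows "measure (PiM I M) {\<theta> \<in> space (PiM I M). real (card {i \<in> I. \<theta> i \<in> A i}) \<le> real (card I) * p + t}
           \<ge> 1 - exp (- 2 * t\<^sup>2 / real (card I))"
proof (cases "I = {}")
  case True
  then show ?thesis by simp
next
  case False
  interpret P: prob_space "PiM I M" using M by (rule prob_space_PiM)
  define X :: "_ \<Rightarrow> _ \<Rightarrow> real" where "X i \<theta> = indicator (A i) (\<theta> i)" for i \<theta>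
  define \<mu> where "\<mu> = (\<Sum>i\<in>I. P.expectation (X i))"
  have card_eq: "real (card {i \<in> I. \<theta> i \<in> A i}) = (\<Sum>i\<in>I. X i \<theta>)" for \<theta>
    using I by (simp add: X_def indicator_def Collect_conj_eq)
  have component: "(\<lambda>\<theta>. \<theta> i) \<in> measurable (PiM I M) (M i)" if "i \<in> I" for i
    using that by (rule measurable_component_singleton)
  have indep: "P.indep_vars (\<lambda>_. borel) X I"
    unfolding X_def using A
    by (intro P.indep_vars_compose2[OF indep_vars_PiM_components[OF I M]]) auto
  interpret H: Hoeffding_ineq "PiM I M" I X "\<lambda>_. 0" "\<lambda>_. 1" \<mu>
    by unfold_locales (use I indep in \<open>auto simp: X_def \<mu>_def\<close>)
  have "P.expectation (X i) = measure (M i) (A i)" if "i \<in> I" for i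
  proof -
    have "P.expectation (X i) = integral\<^sup>L (distr (PiM I M) (M i) (\<lambda>\<theta>. \<theta> i)) (indicator (A i))"
      unfolding X_def using A[OF that] by (intro integral_distr[symmetric] component that) auto
    also have "distr (PiM I M) (M i) (\<lambda>\<theta>. \<theta> i) = M i"
      using M that by (rule distr_PiM_component)
    also have "integral\<^sup>L (M i) (indicator (A i)) = measure (M i) (A i)"
      using A[OF that] by (simp add: Int_absorb2 sets.sets_into_space)
    finally show ?thesis .
  qed
  then have "\<mu> \<le> real (card I) * p"
    unfolding \<mu>_def using p sum_mono[of I _ "\<lambda>_. p"] by simp
  define \<epsilon> where "\<epsilon> = real (card I) * p + t - \<mu>"
  have "t \<le> \<epsilon>" unfolding \<epsilon>_def using \<open>\<mu> \<le> _\<close> by simp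
  have card_pos: "0 < real (card I)" using I False by (simp add: card_gt_0_iff)
  let ?S = "\<lambda>\<theta>. \<Sum>i\<in>I. X i \<theta>"
  let ?T = "{\<theta> \<in> space (PiM I M). ?S \<theta> \<le> real (card I) * p + t}"
  let ?U = "{\<theta> \<in> space (PiM I M). \<mu> + \<epsilon> \<le> ?S \<theta>}"
  have "P.prob ?U \<le> exp (- 2 * \<epsilon>\<^sup>2 / real (card I))"
    using H.Hoeffding_ineq_ge[of \<epsilon>] \<open>t \<le> \<epsilon>\<close> \<open>0 \<le> t\<close> card_pos by simp
  also have "\<dots> \<le> exp (- 2 * t\<^sup>2 / real (card I))"
    using \<open>t \<le> \<epsilon>\<close> \<open>0 \<le> t\<close> card_pos by (auto intro!: divide_right_mono power_mono)
  finally have U: "P.prob ?U \<le> exp (- 2 * t\<^sup>2 / real (card I))" .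
  have [measurable]: "?S \<in> borel_measurable (PiM I M)"
    by (intro borel_measurable_sum H.random_variable)
  have "1 - P.prob ?T = P.prob (space (PiM I M) - ?T)"
    by (intro P.prob_compl[symmetric]) measurable
  also have "\<dots> \<le> P.prob ?U"
    unfolding \<epsilon>_def by (intro P.finite_measure_mono) auto
  finally have "1 - P.prob ?T \<le> P.prob ?U" .
  with U show ?thesis
    unfolding card_eq by simp
qed

definition neuron_measure :: "nat \<Rightarrow> nat \<Rightarrow> ((nat \<Rightarrow> real) \<times> real) measure" where
  "neuron_measure m i = PiM {..i} (\<lambda>j. gauss_m m) \<Otimes>\<^sub>M gauss_m m"

definition flips :: "nat \<Rightarrow> (nat \<Rightarrow> real) \<Rightarrow> (nat \<Rightarrow> real) \<Rightarrow> real \<Rightarrow> (nat \<Rightarrow> real) \<times> real \<Rightarrow> bool"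
  where "flips i x v c z \<longleftrightarrow>
    (ip i (\<lambda>j. fst z j + v j) (xhat i x) + snd z + c \<ge> 0) \<noteq> (ip i (fst z) (xhat i x) + snd z \<ge> 0)"

lemma init_measure_eq_PiM_neuron_measure:
  "init_measure m i = PiM {..<m} (\<lambda>r. neuron_measure m i)"
  unfolding init_measure_def neuron_measure_def ..

lemma flip_set_eq: "flip_set m i w b x \<theta> = {r \<in> {..<m}. flips i x (w r) (b r) (\<theta> r)}"
  unfolding flip_set_def flips_def ..

lemma prob_space_gauss_m: "0 < m \<Longrightarrow> prob_space (gauss_m m)"
  unfolding gauss_m_def by (intro prob_space_normal_density) simp

lemma sets_gauss_m [measurable_cong]: "sets (gauss_m m) = sets borel"
  by (simp add: gauss_m_def)

lemma prob_space_neuron_measure: "0 < m \<Longrightarrow> prob_space (neuron_measure m i)"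
  unfolding neuron_measure_def
  by (intro prob_space_pair prob_space_PiM prob_space_gauss_m)

lemma borel_measurable_ip [measurable]: "(\<lambda>u. ip i u y) \<in> borel_measurable (PiM {..i} (\<lambda>j. gauss_m m))"
  unfolding ip_def by measurable

lemma pred_flips [measurable]: "Measurable.pred (neuron_measure m i) (flips i x v c)"
  unfolding neuron_measure_def flips_def ip_add_left by measurable

lemma flips_imp_abs_le:
  assumes "flips i x v c z"
  shows "\<bar>snd z + ip i (fst z) (xhat i x)\<bar> \<le> \<bar>ip i v (xhat i x) + c\<bar>"
  using assms unfolding flips_def ip_add_left by linarith

lemma measure_flips_le:
  assumes "0 < m" and x: "(\<Sum>j<i. (x j)\<^sup>2) \<le> 1"
  shows "measure (neuron_measure m i) {z \<in> space (neuron_measure m i). flips i x v c z}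
           \<le> 2 * (L2_set v {..i} + \<bar>c\<bar>) * sqrt (real m) / sqrt (2 * pi)"
proof -
  let ?N = "neuron_measure m i"
  let ?t = "L2_set v {..i} + \<bar>c\<bar>"
  interpret N: prob_space ?N using \<open>0 < m\<close> by (rule prob_space_neuron_measure)
  have "\<bar>ip i v (xhat i x) + c\<bar> \<le> ?t"
    using abs_ip_xhat_le[OF x, of v] by linarith
  then have "{z \<in> space ?N. flips i x v c z} \<subseteq> {z \<in> space ?N. \<bar>snd z + ip i (fst z) (xhat i x)\<bar> \<le> ?t}"
    using flips_imp_abs_le by fastforce
  then have "measure ?N {z \<in> space ?N. flips i x v c z}
      \<le> measure ?N {z \<in> space ?N. \<bar>snd z + ip i (fst z) (xhat i x)\<bar> \<le> ?t}"
    by (rule N.finite_measure_mono) (unfold neuron_measure_def, measurable)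
  also have "\<dots> \<le> 2 * ?t / (sqrt (1 / real m) * sqrt (2 * pi))"
    unfolding neuron_measure_def gauss_m_def
    using \<open>0 < m\<close> borel_measurable_ip[of i _ m, unfolded gauss_m_def]
    by (intro measure_pair_normal_abs_add_le prob_space_PiM prob_space_normal_density) auto
  also have "\<dots> = 2 * ?t * sqrt (real m) / sqrt (2 * pi)"
    using \<open>0 < m\<close> by (simp add: real_sqrt_divide field_simps)
  finally show ?thesis .
qed

lemma measure_card_flip_set_ge:
  assumes m: "0 < m" and x: "(\<Sum>j<i. (x j)\<^sup>2) \<le> 1" and "0 \<le> t"
    and q: "\<And>r. r < m \<Longrightarrow> 2 * (L2_set (w r) {..i} + \<bar>b r\<bar>) * sqrt (real m) / sqrt (2 * pi) \<le> q"
  shows "measure (init_measure m i)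
           {\<theta> \<in> space (init_measure m i). real (card (flip_set m i w b x \<theta>)) \<le> real m * q + t}
         \<ge> 1 - exp (- 2 * t\<^sup>2 / real m)"
proof -
  let ?N = "neuron_measure m i"
  let ?A = "\<lambda>r. {z \<in> space ?N. flips i x (w r) (b r) z}"
  have "measure ?N (?A r) \<le> q" if "r < m" for r
    using measure_flips_le[OF m x] q[OF that] by (rule order_trans)
  then have "1 - exp (- 2 * t\<^sup>2 / real (card {..<m})) \<le> measure (PiM {..<m} (\<lambda>r. ?N))
      {\<theta> \<in> space (PiM {..<m} (\<lambda>r. ?N)).
         real (card {r \<in> {..<m}. \<theta> r \<in> ?A r}) \<le> real (card {..<m}) * q + t}"
    using prob_space_neuron_measure[OF m] \<open>0 \<le> t\<close>
    by (intro measure_PiM_card_hits_le) auto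
  moreover have "{r \<in> {..<m}. \<theta> r \<in> ?A r} = flip_set m i w b x \<theta>"
    if "\<theta> \<in> space (PiM {..<m} (\<lambda>r. ?N))" for \<theta>
    using that unfolding flip_set_eq by (auto simp: space_PiM)
  ultimately show ?thesis
    unfolding init_measure_eq_PiM_neuron_measure by (simp cong: conj_cong)
qed

theorem lemma2:
  fixes d i m :: nat and \<Delta> c4 :: real
    and w :: "nat \<Rightarrow> nat \<Rightarrow> real" and b :: "nat \<Rightarrow> real" and x :: "nat \<Rightarrow> real"
  assumes "1 \<le> i" and "i \<le> d" and "1 \<le> m"
    and "\<Delta> > 0" and "c4 \<ge> 1"
    and "\<forall>r<m. sqrt (\<Sum>j\<le>i. (w r j)\<^sup>2) \<le> \<Delta>"
    and "\<forall>r<m. \<bar>b r\<bar> \<le> \<Delta>"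
    and "sqrt (\<Sum>j<i. (x j)\<^sup>2) \<le> 1/2"
  shows "measure (init_measure m i)
           {\<theta> \<in> space (init_measure m i).
              real (card (flip_set m i w b x \<theta>))
                \<le> c4 * (4 * \<Delta> * sqrt (real m) / sqrt pi) * real m}
         \<ge> 1 - exp (- (32 * (c4 - 1)\<^sup>2 * (real m)\<^sup>2 * \<Delta>\<^sup>2 / pi))"
proof -
  define p where "p = 4 * \<Delta> * sqrt (real m) / sqrt pi"
  define t where "t = (c4 - 1) * p * real m"
  have m: "0 < m" using \<open>1 \<le> m\<close> by simp
  have "sqrt (\<Sum>j<i. (x j)\<^sup>2) \<le> 1"
    using \<open>sqrt (\<Sum>j<i. (x j)\<^sup>2) \<le> 1/2\<close> by linarith
  then have x: "(\<Sum>j<i. (x j)\<^sup>2) \<le> 1" by simp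
  have "0 \<le> t"
    unfolding t_def p_def using \<open>c4 \<ge> 1\<close> \<open>\<Delta> > 0\<close> by simp
  have p_bound: "2 * (L2_set (w r) {..i} + \<bar>b r\<bar>) * sqrt (real m) / sqrt (2 * pi) \<le> p"
    if "r < m" for r
  proof -
    have "L2_set (w r) {..i} \<le> \<Delta>" "\<bar>b r\<bar> \<le> \<Delta>"
      using assms(6,7) that by (auto simp: L2_set_def)
    then show ?thesis
      unfolding p_def by (intro frac_le mult_right_mono) (auto intro: real_sqrt_le_mono)
  qed
  have "- 2 * t\<^sup>2 / real m = - (2 * (c4 - 1)\<^sup>2 * p\<^sup>2 * real m)"
    unfolding t_def using m by (simp add: power_mult_distrib power2_eq_square)
  also have "p\<^sup>2 = 16 * \<Delta>\<^sup>2 * real m / pi"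
    unfolding p_def by (simp add: power_divide power_mult_distrib)
  finally have exponent: "- 2 * t\<^sup>2 / real m = - (32 * (c4 - 1)\<^sup>2 * (real m)\<^sup>2 * \<Delta>\<^sup>2 / pi)"
    by (simp add: power2_eq_square)
  have threshold: "real m * p + t = c4 * p * real m"
    unfolding t_def by (simp add: algebra_simps)
  show ?thesis
    using measure_card_flip_set_ge[where w = w and b = b, OF m x \<open>0 \<le> t\<close> p_bound]
    unfolding exponent threshold unfolding p_def .
qed

end
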